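(* Every disconnected graph $H$ is the $\operatorname{IR}$-graph of infinitely many graphs; that is, there are infinitely many (pairwise non-isomorphic) graphs $G$ with $G(\operatorname{IR})\cong H$.
   Context: All graphs are finite and simple. For a graph $G=(V,E)$, $D\subseteq V$ and $v\in D$, $\operatorname{PN}(v,D)=N[v]-N[D-\{v\}]$ (closed neighbourhoods). $D$ is irredundant if $\operatorname{PN}(v,D)\neq\varnothing$ for all $v\in D$; $\operatorname{IR}(G)$ is the maximum cardinality of an irredundant set and an $\operatorname{IR}(G)$-set is an irredundant set of cardinality $\operatorname{IR}(G)$. The $\operatorname{IR}$-graph $G(\operatorname{IR})$ has the $\operatorname{IR}(G)$-sets as vertices, with $D\sim D'$ iff there exist $u\in D$, $v\in D'$, $uv\in E(G)$, with $D'=(D-\{u\})\cup\{v\}$. *)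

theory Defs
  imports Main
begin

type_synonym 'a graph = "'a set \<times> 'a set set"

definition verts :: "'a graph \<Rightarrow> 'a set" where "verts G = fst G"
definition edges :: "'a graph \<Rightarrow> 'a set set" where "edges G = snd G"

definition adj :: "'a graph \<Rightarrow> 'a \<Rightarrow> 'a \<Rightarrow> bool" where
  "adj G u v \<longleftrightarrow> {u, v} \<in> edges G"

definition is_graph :: "'a graph \<Rightarrow> bool" where
  "is_graph G \<longleftrightarrow> finite (verts G) \<and>
     (\<forall>e\<in>edges G. \<exists>u v. e = {u, v} \<and> u \<noteq> v \<and> u \<in> verts G \<and> v \<in> verts G)"

definition graph_iso :: "'a graph \<Rightarrow> 'b graph \<Rightarrow> bool" where
  "graph_iso G H \<longleftrightarrow> (\<exists>f. bij_betw f (verts G) (verts H) \<and>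
     (\<forall>u\<in>verts G. \<forall>v\<in>verts G. adj G u v \<longleftrightarrow> adj H (f u) (f v)))"

definition reachable :: "'a graph \<Rightarrow> 'a \<Rightarrow> 'a \<Rightarrow> bool" where
  "reachable G = (\<lambda>u v. u \<in> verts G \<and> v \<in> verts G \<and> adj G u v)\<^sup>*\<^sup>*"

definition connected_graph :: "'a graph \<Rightarrow> bool" where
  "connected_graph G \<longleftrightarrow> verts G \<noteq> {} \<and>
     (\<forall>u\<in>verts G. \<forall>v\<in>verts G. reachable G u v)"

definition disconnected_graph :: "'a graph \<Rightarrow> bool" where
  "disconnected_graph G \<longleftrightarrow> verts G \<noteq> {} \<and> \<not> connected_graph G"

definition cnbhd :: "'a graph \<Rightarrow> 'a \<Rightarrow> 'a set" where
  "cnbhd G v = insert v {u \<in> verts G. adj G u v}"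

definition cnbhd_set :: "'a graph \<Rightarrow> 'a set \<Rightarrow> 'a set" where
  "cnbhd_set G S = (\<Union>v\<in>S. cnbhd G v)"

definition PN :: "'a graph \<Rightarrow> 'a \<Rightarrow> 'a set \<Rightarrow> 'a set" where
  "PN G v D = cnbhd G v - cnbhd_set G (D - {v})"

definition irredundant :: "'a graph \<Rightarrow> 'a set \<Rightarrow> bool" where
  "irredundant G D \<longleftrightarrow> D \<subseteq> verts G \<and> (\<forall>v\<in>D. PN G v D \<noteq> {})"

definition IR :: "'a graph \<Rightarrow> nat" where
  "IR G = Max (card ` {D. irredundant G D})"

definition IR_sets :: "'a graph \<Rightarrow> 'a set set" where
  "IR_sets G = {D. irredundant G D \<and> card D = IR G}"

definition IR_graph :: "'a graph \<Rightarrow> 'a set graph" where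
  "IR_graph G = (IR_sets G,
     {{D, D'} | D D'. D \<in> IR_sets G \<and> D' \<in> IR_sets G \<and>
        (\<exists>u\<in>D. \<exists>v\<in>D'. adj G u v \<and> D' = (D - {u}) \<union> {v})})"

end

theory Submission
  imports Defs
begin

(* Split the vertices of H into a nonempty set A closed under adjacency and its nonempty
   complement B. Keep the edges of H, join A completely to B, join A completely to a clique T and
   B completely to a clique S, and add a perfect matching between T and S, where
   |T| = |S| = p >= |A| + |B| + 2. In an irredundant set with two vertices in T, a private
   neighbour of a vertex of T can only lie in S, so the set lies in T plus at most one vertex of A
   (symmetrically for S); any other irredundant set has at most |A| + |B| + 2 vertices. Hence the
   IR-sets are exactly {a} u T (a in A) and {b} u S (b in B), the matching supplying the private
   neighbours. Two of them differ by a single exchange along an edge iff their anchors lie on the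
   same side and are adjacent, so a |-> {a} u T, b |-> {b} u S is an isomorphism from H onto G(IR).
   Different p give graphs of different orders. *)

lemma adj_commute: "adj G x y \<longleftrightarrow> adj G y x"
  by (simp add: adj_def insert_commute)

lemma adj_irrefl: "is_graph G \<Longrightarrow> \<not> adj G x x"
  unfolding is_graph_def adj_def by (metis insert_absorb2 doubleton_eq_iff)

lemma adj_in_verts: "is_graph G \<Longrightarrow> adj G x y \<Longrightarrow> x \<in> verts G \<and> y \<in> verts G"
  unfolding is_graph_def adj_def by (auto simp: doubleton_eq_iff)

lemma graph_iso_card_verts: "graph_iso G H \<Longrightarrow> card (verts G) = card (verts H)"
  unfolding graph_iso_def using bij_betw_same_card by blast

lemma graph_iso_common_labelling:
  assumes k: "bij_betw k X (verts G)" and h: "bij_betw h X (verts H)"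
    and adj: "\<And>x y. x \<in> X \<Longrightarrow> y \<in> X \<Longrightarrow> adj G (k x) (k y) \<longleftrightarrow> adj H (h x) (h y)"
  shows "graph_iso G H"
proof -
  let ?f = "h \<circ> inv_into X k"
  have "bij_betw ?f (verts G) (verts H)"
    using bij_betw_inv_into[OF k] h by (rule bij_betw_trans)
  moreover have "adj G u v \<longleftrightarrow> adj H (?f u) (?f v)" if "u \<in> verts G" "v \<in> verts G" for u v
  proof -
    have "inv_into X k u \<in> X" "inv_into X k v \<in> X"
      using that k by (auto simp: bij_betw_def inv_into_into)
    moreover have "k (inv_into X k u) = u" "k (inv_into X k v) = v"
      using that k by (auto simp: bij_betw_def f_inv_into_f)
    ultimately show ?thesis using adj by fastforce
  qed
  ultimately show ?thesis unfolding graph_iso_def by blast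
qed

lemma disconnected_graph_separation:
  assumes "disconnected_graph H"
  obtains C where "C \<noteq> {}" "C \<subset> verts H" "\<And>u v. u \<in> C \<Longrightarrow> v \<in> verts H - C \<Longrightarrow> \<not> adj H u v"
proof -
  obtain u0 v0 where u0: "u0 \<in> verts H" and v0: "v0 \<in> verts H" and "\<not> reachable H u0 v0"
    using assms unfolding disconnected_graph_def connected_graph_def by blast
  define C where "C = {v \<in> verts H. reachable H u0 v}"
  have "u0 \<in> C" using u0 by (simp add: C_def reachable_def)
  moreover have "v0 \<in> verts H - C" using v0 \<open>\<not> reachable H u0 v0\<close> by (simp add: C_def)
  moreover have "\<not> adj H u v" if "u \<in> C" "v \<in> verts H - C" for u v
    using that unfolding C_def reachable_def by (auto intro: rtranclp.rtrancl_into_rtrancl)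
  ultimately show ?thesis using that[of C] by (auto simp: C_def)
qed

definition private_neighbour :: "'a graph \<Rightarrow> 'a set \<Rightarrow> 'a \<Rightarrow> 'a \<Rightarrow> bool" where
  "private_neighbour G D v z \<longleftrightarrow>
     (z = v \<or> adj G z v) \<and> (\<forall>w\<in>D - {v}. z \<noteq> w \<and> \<not> adj G z w)"

lemma private_neighbourD:
  assumes "private_neighbour G D v z"
  shows "z = v \<or> adj G z v" and "w \<in> D \<Longrightarrow> w \<noteq> v \<Longrightarrow> z \<noteq> w \<and> \<not> adj G z w"
  using assms by (auto simp: private_neighbour_def)

lemma private_neighbour_in_verts:
  assumes "is_graph G" and "D \<subseteq> verts G" and "v \<in> D" and "private_neighbour G D v z"
  shows "z \<in> verts G"
  using assms adj_in_verts[of G z v] by (auto simp: private_neighbour_def)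

lemma mem_cnbhd_iff: "is_graph G \<Longrightarrow> z \<in> cnbhd G v \<longleftrightarrow> z = v \<or> adj G z v"
  using adj_in_verts[of G z v] by (auto simp: cnbhd_def)

lemma finite_irredundant: "is_graph G \<Longrightarrow> irredundant G D \<Longrightarrow> finite D"
  unfolding is_graph_def irredundant_def by (meson finite_subset)

lemma PN_nonempty_iff:
  assumes "is_graph G"
  shows "PN G v D \<noteq> {} \<longleftrightarrow> (\<exists>z. private_neighbour G D v z)"
proof -
  have "PN G v D = {z. z \<in> cnbhd G v \<and> (\<forall>w\<in>D - {v}. z \<notin> cnbhd G w)}"
    by (auto simp: PN_def cnbhd_set_def)
  then show ?thesis by (simp add: mem_cnbhd_iff[OF assms] private_neighbour_def)
qed

lemma irredundant_iff_private_neighbour: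
  assumes "is_graph G"
  shows "irredundant G D \<longleftrightarrow> D \<subseteq> verts G \<and> (\<forall>v\<in>D. \<exists>z. private_neighbour G D v z)"
  by (simp add: irredundant_def PN_nonempty_iff[OF assms])

definition exchange :: "'a graph \<Rightarrow> 'a set \<Rightarrow> 'a set \<Rightarrow> bool" where
  "exchange G D D' \<longleftrightarrow> (\<exists>u\<in>D. \<exists>v\<in>D'. adj G u v \<and> D' = (D - {u}) \<union> {v})"

lemma verts_IR_graph: "verts (IR_graph G) = IR_sets G"
  by (simp add: IR_graph_def verts_def)

lemma adj_IR_graph_iff:
  "adj (IR_graph G) D D' \<longleftrightarrow>
     D \<in> IR_sets G \<and> D' \<in> IR_sets G \<and> (exchange G D D' \<or> exchange G D' D)"
  unfolding adj_def IR_graph_def edges_def exchange_def snd_conv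
  by (auto simp: doubleton_eq_iff)

lemma exchange_insert_iff:
  assumes "is_graph G" and "x \<notin> T" and "y \<notin> T"
  shows "exchange G (insert x T) (insert y T) \<longleftrightarrow> adj G x y"
proof
  assume "exchange G (insert x T) (insert y T)"
  then obtain u v where "u \<in> insert x T" "v \<in> insert y T" "adj G u v"
    and "insert y T = (insert x T - {u}) \<union> {v}"
    unfolding exchange_def by blast
  moreover have "u \<noteq> v" using \<open>adj G u v\<close> adj_irrefl[OF assms(1)] by metis
  ultimately have "u = x" and "v = y" using assms(2,3) by blast+
  then show "adj G x y" using \<open>adj G u v\<close> by simp
next
  assume "adj G x y"
  moreover have "insert y T = (insert x T - {x}) \<union> {y}" using assms(2) by auto
  ultimately show "exchange G (insert x T) (insert y T)" unfolding exchange_def by blast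
qed

lemma not_exchange_disjoint:
  assumes "2 \<le> card T" and "T \<inter> D' = {}"
  shows "\<not> exchange G (insert x T) D'"
proof
  assume "exchange G (insert x T) D'"
  then obtain u where kept: "insert x T - {u} \<subseteq> D'" unfolding exchange_def by blast
  have "\<not> T \<subseteq> {u}" using assms(1) card_mono[of "{u}" T] by auto
  then obtain t where "t \<in> T" "t \<noteq> u" by blast
  with kept assms(2) show False by blast
qed

lemma card_subset_Un_at_most_one:
  assumes "finite D" and "finite T" and "D \<subseteq> T \<union> A" and "card (D \<inter> A) \<le> 1"
  shows "card D \<le> card T + 1 \<and> (card D = card T + 1 \<longrightarrow> (\<exists>a\<in>A. D = insert a T))"
proof -
  have D_split: "D = (D \<inter> T) \<union> (D \<inter> A)" using assms(3) by blast
  have le_T: "card (D \<inter> T) \<le> card T" using assms(2) by (simp add: card_mono)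
  have le_sum: "card D \<le> card (D \<inter> T) + card (D \<inter> A)" by (subst D_split) (rule card_Un_le)
  have "\<exists>a\<in>A. D = insert a T" if "card D = card T + 1"
  proof -
    have "D \<inter> T = T"
      using that le_T le_sum assms(2,4) by (intro card_subset_eq) auto
    moreover have "card (D \<inter> A) = 1" using that le_T le_sum assms(4) by linarith
    then obtain a where "D \<inter> A = {a}" by (rule card_1_singletonE)
    ultimately show ?thesis using D_split by auto
  qed
  then show ?thesis using le_T le_sum assms(4) by linarith
qed

locale IR_gadget =
  fixes G :: "'a graph" and A B T S :: "'a set"
  assumes graph: "is_graph G"
    and verts_eq: "verts G = A \<union> B \<union> T \<union> S"
    and disjoint: "A \<inter> B = {}" "A \<inter> T = {}" "A \<inter> S = {}" "B \<inter> T = {}" "B \<inter> S = {}" "T \<inter> S = {}"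
    and adj_A_B: "\<And>a b. a \<in> A \<Longrightarrow> b \<in> B \<Longrightarrow> adj G a b"
    and adj_A_T: "\<And>a t. a \<in> A \<Longrightarrow> t \<in> T \<Longrightarrow> adj G a t"
    and adj_B_S: "\<And>b s. b \<in> B \<Longrightarrow> s \<in> S \<Longrightarrow> adj G b s"
    and not_adj_A_S: "\<And>a s. a \<in> A \<Longrightarrow> s \<in> S \<Longrightarrow> \<not> adj G a s"
    and not_adj_B_T: "\<And>b t. b \<in> B \<Longrightarrow> t \<in> T \<Longrightarrow> \<not> adj G b t"
    and clique_T: "\<And>t t'. t \<in> T \<Longrightarrow> t' \<in> T \<Longrightarrow> t \<noteq> t' \<Longrightarrow> adj G t t'"
    and clique_S: "\<And>s s'. s \<in> S \<Longrightarrow> s' \<in> S \<Longrightarrow> s \<noteq> s' \<Longrightarrow> adj G s s'"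
    and private_S: "\<And>t. t \<in> T \<Longrightarrow> \<exists>s\<in>S. adj G t s \<and> (\<forall>t'\<in>T - {t}. \<not> adj G t' s)"
    and private_T: "\<And>s. s \<in> S \<Longrightarrow> \<exists>t\<in>T. adj G s t \<and> (\<forall>s'\<in>S - {s}. \<not> adj G s' t)"
begin

lemma IR_gadget_swap: "IR_gadget G B A S T"
proof
  show "is_graph G" and "verts G = B \<union> A \<union> S \<union> T"
    and "B \<inter> A = {}" "B \<inter> S = {}" "B \<inter> T = {}" "A \<inter> S = {}" "A \<inter> T = {}" "S \<inter> T = {}"
    using graph verts_eq disjoint by blast+
  show "adj G b a" if "b \<in> B" "a \<in> A" for a b using adj_A_B that adj_commute by metis
qed (fact adj_B_S adj_A_T not_adj_B_T not_adj_A_S clique_S clique_T private_T private_S)+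

lemma finite_parts: "finite A" "finite B" "finite T" "finite S"
  using graph verts_eq by (auto simp: is_graph_def)

lemma irredundant_two_in_T_subset:
  assumes irr: "irredundant G D" and t1: "t1 \<in> D \<inter> T" and t2: "t2 \<in> D \<inter> T" and "t1 \<noteq> t2"
  shows "D \<subseteq> T \<union> A"
proof
  fix x assume x: "x \<in> D"
  have D_verts: "D \<subseteq> verts G" using irr by (simp add: irredundant_def)
  obtain z where z: "private_neighbour G D t1 z"
    using irr t1 by (auto simp: irredundant_iff_private_neighbour[OF graph])
  have t2_far: "z \<noteq> t2 \<and> \<not> adj G z t2"
    using private_neighbourD(2)[OF z] t2 \<open>t1 \<noteq> t2\<close> by auto
  have "z \<notin> A" using t2_far adj_A_T t2 by blast
  moreover have "z \<notin> T" using t2_far clique_T t2 by blast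
  moreover have "z \<notin> B"
    using private_neighbourD(1)[OF z] not_adj_B_T t1 disjoint(4) by blast
  ultimately have "z \<in> S"
    using private_neighbour_in_verts[OF graph D_verts _ z] t1 verts_eq by blast
  moreover have "x \<noteq> t1 \<Longrightarrow> z \<noteq> x \<and> \<not> adj G z x" using private_neighbourD(2)[OF z x] .
  ultimately have "x \<notin> B \<union> S"
    using t1 disjoint(4,6) adj_B_S clique_S adj_commute[of G x z] by blast
  then show "x \<in> T \<union> A" using D_verts x verts_eq by blast
qed

lemma irredundant_two_in_T_card:
  assumes irr: "irredundant G D" and t1: "t1 \<in> D \<inter> T"
  shows "card (D \<inter> A) \<le> 1"
proof -
  have A_unique: "a = a'" if a: "a \<in> D \<inter> A" and a': "a' \<in> D \<inter> A" for a a'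
  proof (rule ccontr)
    assume "a \<noteq> a'"
    have D_verts: "D \<subseteq> verts G" using irr by (simp add: irredundant_def)
    obtain z where z: "private_neighbour G D a z"
      using irr a by (auto simp: irredundant_iff_private_neighbour[OF graph])
    have t1_far: "z \<noteq> t1 \<and> \<not> adj G z t1"
      using private_neighbourD(2)[OF z] t1 a disjoint(2) by blast
    have a'_far: "z \<noteq> a' \<and> \<not> adj G z a'"
      using private_neighbourD(2)[OF z] a' \<open>a \<noteq> a'\<close> by blast
    have "z \<notin> A" using t1_far adj_A_T t1 by blast
    moreover have "z \<notin> T" using t1_far clique_T t1 by blast
    moreover have "z \<notin> B" using a'_far adj_A_B a' adj_commute[of G z a'] by blast
    moreover have "z \<notin> S"
      using private_neighbourD(1)[OF z] not_adj_A_S a disjoint(3) adj_commute[of G z a] by blast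
    ultimately show False
      using private_neighbour_in_verts[OF graph D_verts _ z] a verts_eq by blast
  qed
  have "finite (D \<inter> A)" using finite_irredundant[OF graph irr] by blast
  then show "card (D \<inter> A) \<le> 1"
    using A_unique card_le_Suc0_iff_eq[OF \<open>finite (D \<inter> A)\<close>] by auto
qed

definition anchored :: "'a \<Rightarrow> 'a set" where
  "anchored x = (if x \<in> A then insert x T else insert x S)"

lemma anchored_minus_cliques: "x \<in> A \<union> B \<Longrightarrow> anchored x - (T \<union> S) = {x}"
  using disjoint by (auto simp: anchored_def)

lemma irredundant_insert_T:
  assumes a: "a \<in> A" and "B \<noteq> {}"
  shows "irredundant G (insert a T)"
proof -
  obtain b where b: "b \<in> B" using assms(2) by blast
  have "private_neighbour G (insert a T) a b"
    using adj_A_B[OF a b] adj_commute[of G a b] not_adj_B_T[OF b] b disjoint(4)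
    unfolding private_neighbour_def by blast
  moreover have "\<exists>s. private_neighbour G (insert a T) t s" if t: "t \<in> T" for t
  proof -
    obtain s where s: "s \<in> S" "adj G t s" and only_t: "\<forall>t'\<in>T - {t}. \<not> adj G t' s"
      using private_S[OF t] by blast
    have "private_neighbour G (insert a T) t s"
      using s only_t not_adj_A_S[OF a s(1)] disjoint(3,6) a
        adj_commute[of G t s] adj_commute[of G a s] adj_commute[of G s]
      unfolding private_neighbour_def by blast
    then show ?thesis by blast
  qed
  ultimately show ?thesis
    using a verts_eq by (auto simp: irredundant_iff_private_neighbour[OF graph])
qed

end

locale sized_IR_gadget = IR_gadget +
  assumes A_nonempty: "A \<noteq> {}" and B_nonempty: "B \<noteq> {}"
    and card_T: "card A + card B + 2 \<le> card T" and card_S: "card S = card T"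
begin

lemma irredundant_card_bound:
  assumes irr: "irredundant G D"
  shows "card D \<le> card T + 1 \<and> (card D = card T + 1 \<longrightarrow> D \<in> anchored ` (A \<union> B))"
proof -
  have fin: "finite D" using finite_irredundant[OF graph irr] .
  have at_most_one: "card (D \<inter> X) \<le> 1" if "\<forall>x\<in>D \<inter> X. \<forall>y\<in>D \<inter> X. x = y" for X
    using that card_le_Suc0_iff_eq[of "D \<inter> X"] fin by auto
  consider (two_in_T) t1 t2 where "t1 \<in> D \<inter> T" "t2 \<in> D \<inter> T" "t1 \<noteq> t2"
    | (two_in_S) s1 s2 where "s1 \<in> D \<inter> S" "s2 \<in> D \<inter> S" "s1 \<noteq> s2"
    | (few) "card (D \<inter> T) \<le> 1" "card (D \<inter> S) \<le> 1"
    using at_most_one[of T] at_most_one[of S] by blast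
  then show ?thesis
  proof cases
    case two_in_T
    have "card D \<le> card T + 1 \<and> (card D = card T + 1 \<longrightarrow> (\<exists>a\<in>A. D = insert a T))"
      using irredundant_two_in_T_subset[OF irr two_in_T]
        irredundant_two_in_T_card[OF irr two_in_T(1)] fin finite_parts(3)
      by (intro card_subset_Un_at_most_one)
    moreover have "insert a T = anchored a" if "a \<in> A" for a using that by (simp add: anchored_def)
    ultimately show ?thesis by blast
  next
    case two_in_S
    have "card D \<le> card S + 1 \<and> (card D = card S + 1 \<longrightarrow> (\<exists>b\<in>B. D = insert b S))"
      using IR_gadget.irredundant_two_in_T_subset[OF IR_gadget_swap irr two_in_S]
        IR_gadget.irredundant_two_in_T_card[OF IR_gadget_swap irr two_in_S(1)] fin finite_parts(4)
      by (intro card_subset_Un_at_most_one)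
    moreover have "insert b S = anchored b" if "b \<in> B" for b
      using that disjoint(1) by (auto simp: anchored_def)
    ultimately show ?thesis using card_S by auto
  next
    case few
    have "D \<subseteq> A \<union> B \<union> (D \<inter> T) \<union> (D \<inter> S)" using irr verts_eq by (auto simp: irredundant_def)
    then have "card D \<le> card (A \<union> B \<union> (D \<inter> T) \<union> (D \<inter> S))"
      using finite_parts by (intro card_mono) auto
    also have "\<dots> \<le> card A + card B + card (D \<inter> T) + card (D \<inter> S)"
      by (meson card_Un_le add_le_mono le_refl order_trans)
    finally show ?thesis using few card_T by linarith
  qed
qed

lemma irredundant_anchored:
  assumes "x \<in> A \<union> B"
  shows "irredundant G (anchored x)" and "card (anchored x) = card T + 1"
proof -
  show "irredundant G (anchored x)"
    using irredundant_insert_T IR_gadget.irredundant_insert_T[OF IR_gadget_swap] assms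
      A_nonempty B_nonempty by (auto simp: anchored_def)
  show "card (anchored x) = card T + 1"
    using assms disjoint finite_parts card_S by (auto simp: anchored_def disjoint_iff)
qed

lemma IR_eq: "IR G = card T + 1"
  unfolding IR_def
proof (rule Max_eqI)
  have "{D. irredundant G D} \<subseteq> Pow (verts G)" by (auto simp: irredundant_def)
  moreover have "finite (Pow (verts G))" using graph by (simp add: is_graph_def)
  ultimately show "finite (card ` {D. irredundant G D})" by (metis finite_subset finite_imageI)
  show "y \<le> card T + 1" if "y \<in> card ` {D. irredundant G D}" for y
    using that irredundant_card_bound by auto
  obtain a where "a \<in> A" using A_nonempty by blast
  then show "card T + 1 \<in> card ` {D. irredundant G D}"
    using irredundant_anchored[of a] by (intro image_eqI[of _ _ "anchored a"]) auto
qed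

lemma IR_sets_eq: "IR_sets G = anchored ` (A \<union> B)"
  using irredundant_card_bound irredundant_anchored by (auto simp: IR_sets_def IR_eq)

lemma bij_betw_anchored: "bij_betw anchored (A \<union> B) (IR_sets G)"
proof -
  have "inj_on anchored (A \<union> B)"
    by (rule inj_onI) (metis anchored_minus_cliques singleton_inject)
  then show ?thesis by (simp add: bij_betw_def IR_sets_eq)
qed

lemma exchange_anchored_iff:
  assumes x: "x \<in> A \<union> B" and y: "y \<in> A \<union> B"
  shows "exchange G (anchored x) (anchored y) \<longleftrightarrow> (x \<in> A \<longleftrightarrow> y \<in> A) \<and> adj G x y"
proof -
  have "2 \<le> card T" "2 \<le> card S" using card_T card_S by auto
  have not_in: "x \<notin> T" "y \<notin> T" "x \<notin> S" "y \<notin> S" using x y disjoint by blast+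
  show ?thesis
  proof (cases "x \<in> A"; cases "y \<in> A")
    assume "x \<in> A" "y \<in> A"
    then show ?thesis using exchange_insert_iff[OF graph not_in(1,2)] by (simp add: anchored_def)
  next
    assume "x \<in> A" "y \<notin> A"
    moreover have "T \<inter> insert y S = {}" using not_in(2) disjoint(6) by blast
    ultimately show ?thesis
      using not_exchange_disjoint[OF \<open>2 \<le> card T\<close>] by (simp add: anchored_def)
  next
    assume "x \<notin> A" "y \<in> A"
    moreover have "S \<inter> insert y T = {}" using not_in(4) disjoint(6) by blast
    ultimately show ?thesis
      using not_exchange_disjoint[OF \<open>2 \<le> card S\<close>] by (simp add: anchored_def)
  next
    assume "x \<notin> A" "y \<notin> A"
    then show ?thesis using exchange_insert_iff[OF graph not_in(3,4)] by (simp add: anchored_def)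
  qed
qed

lemma adj_IR_graph_anchored_iff:
  assumes "x \<in> A \<union> B" and "y \<in> A \<union> B"
  shows "adj (IR_graph G) (anchored x) (anchored y) \<longleftrightarrow> (x \<in> A \<longleftrightarrow> y \<in> A) \<and> adj G x y"
  using assms exchange_anchored_iff adj_commute[of G x y] IR_sets_eq
  by (auto simp: adj_IR_graph_iff)

end

locale IR_realisation =
  fixes H :: "'b graph" and n :: nat and g :: "nat \<Rightarrow> 'b" and C :: "'b set"
  assumes graph: "is_graph H" and labelling: "bij_betw g {..<n} (verts H)"
    and C_nonempty: "C \<noteq> {}" and C_psubset: "C \<subset> verts H"
    and C_separated: "\<And>u v. u \<in> C \<Longrightarrow> v \<in> verts H - C \<Longrightarrow> \<not> adj H u v"
begin

definition A :: "nat set" where "A = {i. i < n \<and> g i \<in> C}"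
definition B :: "nat set" where "B = {i. i < n \<and> g i \<notin> C}"
definition T :: "nat \<Rightarrow> nat set" where "T p = {n..<n + p}"
definition S :: "nat \<Rightarrow> nat set" where "S p = {n + p..<n + 2 * p}"

definition realiser_adj :: "nat \<Rightarrow> nat \<Rightarrow> nat \<Rightarrow> bool" where
  "realiser_adj p x y \<longleftrightarrow>
     (x < n \<and> y < n \<and> adj H (g x) (g y)) \<or> (x \<in> A \<and> y \<in> B) \<or> (x \<in> A \<and> y \<in> T p) \<or>
     (x \<in> B \<and> y \<in> S p) \<or> (x \<in> T p \<and> y \<in> T p \<and> x \<noteq> y) \<or>
     (x \<in> S p \<and> y \<in> S p \<and> x \<noteq> y) \<or> (x \<in> T p \<and> y = x + p)"

definition realiser :: "nat \<Rightarrow> nat graph" where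
  "realiser p = ({..<n + 2 * p}, {{x, y} | x y. realiser_adj p x y})"

lemma A_B_partition: "A \<union> B = {..<n}" "A \<inter> B = {}"
  by (auto simp: A_def B_def)

lemma A_B_nonempty: "A \<noteq> {}" "B \<noteq> {}"
proof -
  have g_onto: "\<exists>i<n. g i = v" if "v \<in> verts H" for v
    using labelling that by (metis bij_betw_iff_bijections lessThan_iff)
  show "A \<noteq> {}" using C_nonempty C_psubset g_onto by (fastforce simp: A_def)
  show "B \<noteq> {}" using C_psubset g_onto by (fastforce simp: B_def)
qed

lemma verts_realiser: "verts (realiser p) = {..<n + 2 * p}"
  by (simp add: realiser_def verts_def)

lemma adj_realiser_iff: "adj (realiser p) x y \<longleftrightarrow> realiser_adj p x y \<or> realiser_adj p y x"
  by (auto simp: realiser_def adj_def edges_def doubleton_eq_iff)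

lemmas realiser_defs = adj_realiser_iff realiser_adj_def A_def B_def T_def S_def

lemma realiser_adj_distinct_bounded:
  "realiser_adj p x y \<Longrightarrow> x \<noteq> y \<and> x < n + 2 * p \<and> y < n + 2 * p"
  using adj_irrefl[OF graph, of "g x"] by (auto simp: realiser_defs)

lemma is_graph_realiser: "is_graph (realiser p)"
  unfolding is_graph_def
proof (intro conjI ballI)
  show "finite (verts (realiser p))" by (simp add: verts_realiser)
  fix e assume "e \<in> edges (realiser p)"
  then obtain x y where "e = {x, y}" and "realiser_adj p x y"
    by (auto simp: realiser_def edges_def)
  then show "\<exists>u v. e = {u, v} \<and> u \<noteq> v \<and> u \<in> verts (realiser p) \<and> v \<in> verts (realiser p)"
    using realiser_adj_distinct_bounded[of p x y] by (auto simp: verts_realiser)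
qed

lemma IR_gadget_realiser: "IR_gadget (realiser p) A B (T p) (S p)"
proof
  show "is_graph (realiser p)" by (rule is_graph_realiser)
  have "{..<n + 2 * p} = {..<n} \<union> T p \<union> S p" by (auto simp: T_def S_def)
  then show "verts (realiser p) = A \<union> B \<union> T p \<union> S p"
    by (simp add: verts_realiser A_B_partition(1))
  show "A \<inter> B = {}" "A \<inter> T p = {}" "A \<inter> S p = {}" "B \<inter> T p = {}" "B \<inter> S p = {}" "T p \<inter> S p = {}"
    by (auto simp: A_def B_def T_def S_def)
  show "\<exists>s\<in>S p. adj (realiser p) t s \<and> (\<forall>t'\<in>T p - {t}. \<not> adj (realiser p) t' s)"
    if "t \<in> T p" for t
    using that by (intro bexI[of _ "t + p"]) (auto simp: realiser_defs)
  show "\<exists>t\<in>T p. adj (realiser p) s t \<and> (\<forall>s'\<in>S p - {s}. \<not> adj (realiser p) s' t)"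
    if "s \<in> S p" for s
    using that by (intro bexI[of _ "s - p"]) (auto simp: realiser_defs)
qed (auto simp: realiser_defs)

lemma adj_realiser_labelled:
  assumes "x < n" and "y < n"
  shows "(x \<in> A \<longleftrightarrow> y \<in> A) \<and> adj (realiser p) x y \<longleftrightarrow> adj H (g x) (g y)"
proof (cases "x \<in> A \<longleftrightarrow> y \<in> A")
  case True
  then show ?thesis
    using assms adj_commute[of H "g x" "g y"] by (auto simp: realiser_defs)
next
  case False
  have "g x \<in> verts H" "g y \<in> verts H" using assms labelling by (auto simp: bij_betw_def)
  then have "\<not> adj H (g x) (g y)"
    using False assms C_separated[of "g x" "g y"] C_separated[of "g y" "g x"]
      adj_commute[of H "g x" "g y"]
    by (auto simp: A_def)
  then show ?thesis using False by blast
qed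

lemma IR_graph_realiser_iso:
  assumes "n + 2 \<le> p"
  shows "graph_iso (IR_graph (realiser p)) H"
proof -
  interpret sized_IR_gadget "realiser p" A B "T p" "S p"
  proof (intro sized_IR_gadget.intro IR_gadget_realiser sized_IR_gadget_axioms.intro A_B_nonempty)
    have "card A + card B = n"
      using A_B_partition by (metis card_Un_disjoint card_lessThan finite_Un finite_lessThan)
    then show "card A + card B + 2 \<le> card (T p)" using assms by (simp add: T_def)
  qed (simp add: T_def S_def)
  show ?thesis
  proof (rule graph_iso_common_labelling)
    show "bij_betw anchored {..<n} (verts (IR_graph (realiser p)))"
      using bij_betw_anchored by (simp add: A_B_partition verts_IR_graph)
    show "bij_betw g {..<n} (verts H)" by (rule labelling)
    show "adj (IR_graph (realiser p)) (anchored x) (anchored y) \<longleftrightarrow> adj H (g x) (g y)"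
      if "x \<in> {..<n}" "y \<in> {..<n}" for x y
      using that adj_IR_graph_anchored_iff adj_realiser_labelled by (simp add: A_B_partition(1))
  qed
qed

lemma card_verts_realiser: "card (verts (realiser p)) = n + 2 * p"
  by (simp add: verts_realiser)

lemma infinitely_many_realisers:
  "\<exists>\<G> :: nat graph set. infinite \<G> \<and>
     (\<forall>G\<in>\<G>. is_graph G \<and> graph_iso (IR_graph G) H) \<and>
     (\<forall>G1\<in>\<G>. \<forall>G2\<in>\<G>. G1 \<noteq> G2 \<longrightarrow> \<not> graph_iso G1 G2)"
proof (rule exI[of _ "realiser ` {n + 2..}"], intro conjI ballI impI)
  let ?\<G> = "realiser ` {n + 2..}"
  have "inj_on realiser {n + 2..}"
    by (rule inj_onI) (metis card_verts_realiser add_left_cancel mult_left_cancel zero_neq_numeral)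
  then show "infinite ?\<G>" using finite_imageD infinite_Ici by blast
  show "is_graph G" and "graph_iso (IR_graph G) H" if "G \<in> ?\<G>" for G
    using that is_graph_realiser IR_graph_realiser_iso by auto
  show "\<not> graph_iso G1 G2" if "G1 \<in> ?\<G>" "G2 \<in> ?\<G>" "G1 \<noteq> G2" for G1 G2
    using that graph_iso_card_verts card_verts_realiser by fastforce
qed

end

theorem theorem3p1:
  fixes H :: "'b graph"
  assumes "is_graph H" and "disconnected_graph H"
  shows "\<exists>\<G> :: nat graph set. infinite \<G> \<and>
           (\<forall>G\<in>\<G>. is_graph G \<and> graph_iso (IR_graph G) H) \<and>
           (\<forall>G1\<in>\<G>. \<forall>G2\<in>\<G>. G1 \<noteq> G2 \<longrightarrow> \<not> graph_iso G1 G2)"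
proof -
  obtain C where "C \<noteq> {}" "C \<subset> verts H" "\<And>u v. u \<in> C \<Longrightarrow> v \<in> verts H - C \<Longrightarrow> \<not> adj H u v"
    using disconnected_graph_separation[OF assms(2)] by blast
  moreover obtain g where "bij_betw g {..<card (verts H)} (verts H)"
    using ex_bij_betw_nat_finite[of "verts H"] assms(1)
    by (auto simp: is_graph_def atLeast0LessThan)
  ultimately interpret IR_realisation H "card (verts H)" g C
    using assms(1) by unfold_locales
  show ?thesis by (rule infinitely_many_realisers)
qed

end
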